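(* For every $m\in\mathbb Z$ and every $q\in\mathbb C$ with $|q|\neq 1$ (and $q\ne 0$), the $3\times 3$ matrix $$\mathbf J_m(q)=\begin{pmatrix}1 & G^{(2)}_m(q) & G^{(2)}_{m+1}(q)\\ 0 & G^{(1)}_m(q) & G^{(1)}_{m+1}(q)\\ 0& G^{(0)}_m(q) & G^{(0)}_{m+1}(q)\end{pmatrix}$$ satisfies $$\mathbf J_{m+1}(q)=\mathbf J_m(q)\,A(q^m,q),\qquad A(q^m,q)=\begin{pmatrix}1&0&1\\0&0&-1\\0&1&2-q^{m+1}\end{pmatrix},$$ has $\det \mathbf J_m(q)=-1$, and satisfies $$\mathbf J_m(q^{-1})=\begin{pmatrix}1&0&0\\0&-1&0\\0&0&1\end{pmatrix}\mathbf J_{-m-1}(q)\begin{pmatrix}1&0&0\\0&0&1\\0&1&0\end{pmatrix}.$$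
   Context: Notation: $(a;q)_n=\prod_{j=0}^{n-1}(1-aq^j)$. For $|q|<1$ and integers $k\ge1$, $n\ge 0$, put $E_k^{(n)}(q)=\sum_{s\ge1}s^{k-1}\frac{q^{s(n+1)}}{1-q^s}$ and $E_2(q)=1-24E_2^{(0)}(q)$. For $|q|<1$ and $m\in\mathbb Z$ define $G^{(0)}_m(q)=\sum_{n\ge0}(-1)^n\frac{q^{n(n+1)/2+mn}}{(q;q)_n^2}$, $G^{(1)}_m(q)=\sum_{n\ge0}\big(n+m+\tfrac12-2E_1^{(n)}(q)\big)(-1)^n\frac{q^{n(n+1)/2+mn}}{(q;q)_n^2}$, $G^{(2)}_m(q)=\sum_{n\ge0}\Big(\tfrac12\big(n+m+\tfrac12-2E_1^{(n)}(q)\big)^2-E_2^{(n)}(q)-\tfrac1{24}E_2(q)\Big)(-1)^n\frac{q^{n(n+1)/2+mn}}{(q;q)_n^2}$. These are extended to $|q|>1$ by setting $G^{(j)}_m(q^{-1})=(-1)^jG^{(j)}_{-m}(q)$ for $|q|<1$, $j=0,1,2$. *)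

theory Defs
  imports "HOL-Analysis.Analysis"
begin

definition qpoch :: "complex \<Rightarrow> complex \<Rightarrow> nat \<Rightarrow> complex" where
  "qpoch a q n = (\<Prod>j<n. 1 - a * q ^ j)"

definition Ekn :: "nat \<Rightarrow> nat \<Rightarrow> complex \<Rightarrow> complex" where
  "Ekn k n q = (\<Sum>t. of_nat (Suc t) ^ (k - 1) * q ^ (Suc t * (n + 1)) / (1 - q ^ Suc t))"

definition E2 :: "complex \<Rightarrow> complex" where
  "E2 q = 1 - 24 * Ekn 2 0 q"

definition Gterm :: "int \<Rightarrow> complex \<Rightarrow> nat \<Rightarrow> complex" where
  "Gterm m q n = (-1) ^ n * q powi (int (n * (n + 1) div 2) + m * int n) / (qpoch q q n) ^ 2"

definition Lfac :: "int \<Rightarrow> complex \<Rightarrow> nat \<Rightarrow> complex" where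
  "Lfac m q n = of_nat n + of_int m + 1/2 - 2 * Ekn 1 n q"

definition G0in :: "int \<Rightarrow> complex \<Rightarrow> complex" where
  "G0in m q = (\<Sum>n. Gterm m q n)"

definition G1in :: "int \<Rightarrow> complex \<Rightarrow> complex" where
  "G1in m q = (\<Sum>n. Lfac m q n * Gterm m q n)"

definition G2in :: "int \<Rightarrow> complex \<Rightarrow> complex" where
  "G2in m q = (\<Sum>n. ((1/2) * (Lfac m q n) ^ 2 - Ekn 2 n q - (1/24) * E2 q) * Gterm m q n)"

text \<open>Extension to |q| > 1 via G^(j)_m(q^{-1}) = (-1)^j G^(j)_{-m}(q) for |q|<1.\<close>
definition G0 :: "int \<Rightarrow> complex \<Rightarrow> complex" where
  "G0 m q = (if norm q < 1 then G0in m q else G0in (- m) (inverse q))"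

definition G1 :: "int \<Rightarrow> complex \<Rightarrow> complex" where
  "G1 m q = (if norm q < 1 then G1in m q else - G1in (- m) (inverse q))"

definition G2 :: "int \<Rightarrow> complex \<Rightarrow> complex" where
  "G2 m q = (if norm q < 1 then G2in m q else G2in (- m) (inverse q))"

definition Jmat :: "int \<Rightarrow> complex \<Rightarrow> complex ^ 3 ^ 3" where
  "Jmat m q = vector [vector [1, G2 m q, G2 (m + 1) q],
                      vector [0, G1 m q, G1 (m + 1) q],
                      vector [0, G0 m q, G0 (m + 1) q]]"

definition Amat :: "int \<Rightarrow> complex \<Rightarrow> complex ^ 3 ^ 3" where
  "Amat m q = vector [vector [1, 0, 1],
                      vector [0, 0, -1],
                      vector [0, 1, 2 - q powi (m + 1)]]"

end

theory Submission
  imports Defs "HOL-Real_Asymp.Real_Asymp"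
begin

text \<open>
  For \<open>|q| < 1\<close> write \<open>g\<^sub>m(n)\<close> for the summand \<open>Gterm m q n\<close>. Raising \<open>m\<close> by one multiplies
  \<open>g\<^sub>m(n)\<close> by \<open>q^n\<close>, and \<open>g\<^sub>m(n+1) (1 - q^(n+1))^2 = -q^(m+1) g\<^sub>m\<^sub>+\<^sub>1(n)\<close>. Hence, for weights
  \<open>w\<^sub>j\<close> with \<open>w\<^sub>2(n+1) y^2 - 2 w\<^sub>1(n+1) y + w\<^sub>0(n+1) = w\<^sub>1(n) (1 - y)^2\<close> at \<open>y = q^(n+1)\<close>, the
  series \<open>\<Sum>\<^sub>n w\<^sub>j(n) g\<^sub>m\<^sub>+\<^sub>j(n)\<close> satisfy the three-term recurrence encoded by \<open>A(q^m, q)\<close>, up to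
  a constant coming from \<open>n = 0\<close>. The weights of \<open>G\<^sup>(\<^sup>0\<^sup>)\<close>, \<open>G\<^sup>(\<^sup>1\<^sup>)\<close>, \<open>G\<^sup>(\<^sup>2\<^sup>)\<close> meet this condition
  because the decrements of \<open>E\<^sub>1\<^sup>(\<^sup>n\<^sup>)\<close> and \<open>E\<^sub>2\<^sup>(\<^sup>n\<^sup>)\<close> in \<open>n\<close> are \<open>y/(1 - y)\<close> and \<open>y/(1 - y)^2\<close>.

  The recurrence is \<open>J\<^sub>m\<^sub>+\<^sub>1 = J\<^sub>m A\<close>, and \<open>det A = 1\<close>, so the Wronskian \<open>det J\<^sub>m\<close> does not depend
  on \<open>m\<close>. As \<open>m \<rightarrow> \<infinity>\<close> only the \<open>n = 0\<close> summands survive: \<open>G\<^sup>(\<^sup>0\<^sup>)\<^sub>m \<rightarrow> 1\<close> and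
  \<open>G\<^sup>(\<^sup>1\<^sup>)\<^sub>m - m G\<^sup>(\<^sup>0\<^sup>)\<^sub>m\<close> converges, which forces \<open>det J\<^sub>m = -1\<close>. The case \<open>|q| > 1\<close> is the
  reflection \<open>m \<mapsto> -m\<close> of the case \<open>|q\<^sup>-\<^sup>1| < 1\<close>.
\<close>

lemma qpoch_Suc: "qpoch a q (Suc n) = qpoch a q n * (1 - a * q ^ n)"
  by (simp add: qpoch_def)

lemma norm_one_minus_power_Suc_ge:
  fixes q :: complex
  assumes "norm q < 1"
  shows "1 - norm q \<le> norm (1 - q ^ Suc k)"
proof -
  have "norm q ^ Suc k \<le> norm q"
    using assms by (simp add: mult_left_le power_le_one)
  hence "norm (q ^ Suc k) \<le> norm q"
    by (simp add: norm_power norm_mult)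
  moreover have "1 - norm (q ^ Suc k) \<le> norm (1 - q ^ Suc k)"
    by (metis norm_one norm_triangle_ineq2)
  ultimately show ?thesis by linarith
qed

lemma one_minus_power_Suc_nonzero:
  fixes q :: complex
  assumes "norm q < 1"
  shows "1 - q ^ Suc k \<noteq> 0"
  using norm_one_minus_power_Suc_ge[OF assms, of k] assms by auto

lemma qpoch_self_nonzero:
  fixes q :: complex
  assumes "norm q < 1"
  shows "qpoch q q n \<noteq> 0"
  using one_minus_power_Suc_nonzero[OF assms] by (simp add: qpoch_def)

lemma Gterm_0 [simp]: "Gterm m q 0 = 1"
  by (simp add: Gterm_def qpoch_def)

lemma Gterm_add_int:
  assumes "q \<noteq> 0"
  shows "Gterm (m + int j) q n = q ^ (j * n) * Gterm m q n"
proof -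
  have "q powi (int (n * (n + 1) div 2) + (m + int j) * int n) =
        q powi (int (n * (n + 1) div 2) + m * int n) * q powi (int (j * n))"
    using assms by (simp add: power_int_add [symmetric] algebra_simps)
  moreover have "q powi (int (j * n)) = q ^ (j * n)"
    by (rule power_int_of_nat)
  ultimately show ?thesis by (simp add: Gterm_def)
qed

lemma Gterm_Suc:
  fixes q :: complex
  assumes "q \<noteq> 0" "norm q < 1"
  shows "Gterm m q (Suc k) * (1 - q ^ Suc k)\<^sup>2 = - (q powi (m + 1)) * Gterm (m + 1) q k"
proof -
  define P where "P = q powi (int (k * (k + 1) div 2) + (m + 1) * int k)"
  define a where "a = qpoch q q k"
  define b where "b = 1 - q ^ Suc k"
  have "Suc k * (Suc k + 1) = k * (k + 1) + 2 * Suc k"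
    by simp
  hence exponent: "int (Suc k * (Suc k + 1) div 2) + m * int (Suc k) =
         (int (k * (k + 1) div 2) + (m + 1) * int k) + (m + 1)"
    by (simp add: algebra_simps)
  have "q powi (int (Suc k * (Suc k + 1) div 2) + m * int (Suc k)) = P * q powi (m + 1)"
    unfolding exponent P_def using assms(1) by (simp add: power_int_add)
  hence Gterm_Suc_k: "Gterm m q (Suc k) = - ((-1) ^ k * P * q powi (m + 1)) / (a * b) ^ 2"
    by (simp add: Gterm_def qpoch_Suc a_def b_def)
  have Gterm_k: "Gterm (m + 1) q k = (-1) ^ k * P / a ^ 2"
    by (simp add: Gterm_def P_def a_def)
  have "a \<noteq> 0" "b \<noteq> 0"
    using qpoch_self_nonzero one_minus_power_Suc_nonzero assms(2) by (auto simp: a_def b_def)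
  thus ?thesis
    unfolding Gterm_Suc_k Gterm_k b_def[symmetric] by (simp add: field_simps power2_eq_square)
qed

lemma norm_Gterm_Suc_le:
  fixes q :: complex
  assumes "q \<noteq> 0" "norm q < 1"
  shows "norm (Gterm m q (Suc n)) * (1 - norm q)\<^sup>2
           \<le> norm (q powi (m + 1)) * norm q ^ n * norm (Gterm m q n)"
proof -
  have "norm (Gterm m q (Suc n)) * (1 - norm q)\<^sup>2
          \<le> norm (Gterm m q (Suc n)) * norm (1 - q ^ Suc n) ^ 2"
    using norm_one_minus_power_Suc_ge[OF assms(2), of n] assms(2)
    by (intro mult_left_mono power_mono) auto
  also have "\<dots> = norm (Gterm m q (Suc n) * (1 - q ^ Suc n)\<^sup>2)"
    by (simp add: norm_mult norm_power)
  also have "\<dots> = norm (q powi (m + 1)) * norm q ^ n * norm (Gterm m q n)"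
    using Gterm_Suc[OF assms, of m n] Gterm_add_int[OF assms(1), of m 1 n]
    by (simp add: norm_mult norm_power)
  finally show ?thesis .
qed

subsection \<open>Exponentially bounded weights\<close>

definition exp_bounded :: "(nat \<Rightarrow> 'a::real_normed_div_algebra) \<Rightarrow> bool" where
  "exp_bounded f \<longleftrightarrow> (\<exists>C K. \<forall>n. norm (f n) \<le> C * K ^ n)"

lemma exp_boundedI: "(\<And>n. norm (f n) \<le> C * K ^ n) \<Longrightarrow> exp_bounded f"
  unfolding exp_bounded_def by blast

lemma exp_boundedE:
  assumes "exp_bounded f"
  obtains C K where "0 \<le> C" "1 \<le> K" "\<And>n. norm (f n) \<le> C * K ^ n"
proof -
  obtain C K where CK: "\<And>n. norm (f n) \<le> C * K ^ n"
    using assms unfolding exp_bounded_def by blast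
  have "norm (f n) \<le> \<bar>C\<bar> * (max 1 \<bar>K\<bar>) ^ n" for n
  proof -
    have "C * K ^ n \<le> \<bar>C * K ^ n\<bar>" by simp
    also have "\<dots> = \<bar>C\<bar> * \<bar>K\<bar> ^ n" by (simp add: abs_mult power_abs)
    also have "\<dots> \<le> \<bar>C\<bar> * (max 1 \<bar>K\<bar>) ^ n" by (intro mult_left_mono power_mono) auto
    finally show ?thesis using CK[of n] by linarith
  qed
  thus ?thesis using that[of "\<bar>C\<bar>" "max 1 \<bar>K\<bar>"] by auto
qed

lemma exp_bounded_const: "exp_bounded (\<lambda>n. c)"
  by (rule exp_boundedI[of _ "norm c" 1]) simp

lemma exp_bounded_power: "exp_bounded (\<lambda>n. z ^ n)"
  by (rule exp_boundedI[of _ 1 "norm z"]) (simp add: norm_power)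

lemma exp_bounded_add:
  assumes "exp_bounded f" "exp_bounded g"
  shows "exp_bounded (\<lambda>n. f n + g n)"
proof -
  obtain C1 K1 where 1: "0 \<le> C1" "1 \<le> K1" "\<And>n. norm (f n) \<le> C1 * K1 ^ n"
    using exp_boundedE[OF assms(1)] by blast
  obtain C2 K2 where 2: "0 \<le> C2" "1 \<le> K2" "\<And>n. norm (g n) \<le> C2 * K2 ^ n"
    using exp_boundedE[OF assms(2)] by blast
  show ?thesis
  proof (rule exp_boundedI[of _ "C1 + C2" "max K1 K2"])
    fix n
    have "norm (f n + g n) \<le> C1 * K1 ^ n + C2 * K2 ^ n"
      using 1 2 norm_triangle_le by (meson add_mono)
    also have "\<dots> \<le> C1 * (max K1 K2) ^ n + C2 * (max K1 K2) ^ n"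
      using 1 2 by (intro add_mono mult_left_mono power_mono) auto
    finally show "norm (f n + g n) \<le> (C1 + C2) * (max K1 K2) ^ n"
      by (simp add: algebra_simps)
  qed
qed

lemma exp_bounded_mult:
  assumes "exp_bounded f" "exp_bounded g"
  shows "exp_bounded (\<lambda>n. f n * g n)"
proof -
  obtain C1 K1 where 1: "0 \<le> C1" "1 \<le> K1" "\<And>n. norm (f n) \<le> C1 * K1 ^ n"
    using exp_boundedE[OF assms(1)] by blast
  obtain C2 K2 where 2: "0 \<le> C2" "1 \<le> K2" "\<And>n. norm (g n) \<le> C2 * K2 ^ n"
    using exp_boundedE[OF assms(2)] by blast
  show ?thesis
  proof (rule exp_boundedI[of _ "C1 * C2" "K1 * K2"])
    fix n
    have "norm (f n * g n) \<le> (C1 * K1 ^ n) * (C2 * K2 ^ n)"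
      unfolding norm_mult using 1 2 by (intro mult_mono) auto
    thus "norm (f n * g n) \<le> (C1 * C2) * (K1 * K2) ^ n"
      by (simp add: algebra_simps power_mult_distrib)
  qed
qed

lemma exp_bounded_diff:
  assumes "exp_bounded f" "exp_bounded g"
  shows "exp_bounded (\<lambda>n. f n - g n)"
proof -
  have "exp_bounded (\<lambda>n. - g n)"
    using assms(2) unfolding exp_bounded_def by simp
  from exp_bounded_add[OF assms(1) this] show ?thesis by simp
qed

lemma exp_bounded_bounded_increments:
  assumes "\<And>n. norm (f (Suc n) - f n) \<le> B"
  shows "exp_bounded f"
proof (rule exp_boundedI[of _ "norm (f 0) + \<bar>B\<bar>" 2])
  fix n
  show "norm (f n) \<le> (norm (f 0) + \<bar>B\<bar>) * 2 ^ n"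
  proof (induction n)
    case (Suc n)
    have "norm (f (Suc n)) \<le> norm (f n) + norm (f (Suc n) - f n)"
      by (metis add.commute diff_add_cancel norm_triangle_ineq)
    also have "\<dots> \<le> (norm (f 0) + \<bar>B\<bar>) * 2 ^ n + (norm (f 0) + \<bar>B\<bar>) * 1"
      using Suc assms[of n] by (smt (verit, best) norm_ge_zero)
    also have "\<dots> \<le> (norm (f 0) + \<bar>B\<bar>) * 2 ^ n + (norm (f 0) + \<bar>B\<bar>) * 2 ^ n"
      by (intro add_left_mono mult_left_mono) auto
    finally show ?case by (simp add: algebra_simps)
  qed simp
qed

lemma summable_norm_mult_Gterm:
  fixes q :: complex
  assumes q: "q \<noteq> 0" "norm q < 1" and w: "exp_bounded w"
  shows "summable (\<lambda>n. norm (w n * Gterm m q n))"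
proof -
  obtain C K where CK: "0 \<le> C" "1 \<le> K" "\<And>n. norm (w n) \<le> C * K ^ n"
    using exp_boundedE[OF w] by blast
  define d where "d = (1 - norm q)\<^sup>2"
  define f where "f n = K ^ n * norm (Gterm m q n)" for n
  have d: "d > 0" using q by (simp add: d_def)
  have "(\<lambda>n. K * norm (q powi (m + 1)) / d * norm q ^ n) \<longlonglongrightarrow> 0"
    using q(2) by (intro tendsto_mult_right_zero LIMSEQ_power_zero) simp
  from order_tendstoD(2)[OF this, of "1/2"]
  obtain N where N: "\<And>n. n \<ge> N \<Longrightarrow> K * norm (q powi (m + 1)) / d * norm q ^ n < 1/2"
    unfolding eventually_sequentially by auto
  have ratio: "norm (f (Suc n)) \<le> 1/2 * norm (f n)" if "n \<ge> N" for n
  proof -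
    have "norm (Gterm m q (Suc n)) \<le> norm (q powi (m + 1)) / d * norm q ^ n * norm (Gterm m q n)"
      using norm_Gterm_Suc_le[OF q, of m n] d by (simp add: d_def field_simps)
    hence "f (Suc n) \<le> K * K ^ n * (norm (q powi (m + 1)) / d * norm q ^ n * norm (Gterm m q n))"
      using CK unfolding f_def power_Suc by (intro mult_left_mono) auto
    also have "\<dots> = (K * norm (q powi (m + 1)) / d * norm q ^ n) * f n"
      by (simp add: f_def)
    also have "\<dots> \<le> 1/2 * f n"
      using N[OF that] CK by (intro mult_right_mono) (auto simp: f_def)
    finally show ?thesis using CK by (simp add: f_def)
  qed
  have "summable f"
    by (rule summable_ratio_test[of "1/2" N]) (use ratio in auto)
  show ?thesis
  proof (rule summable_comparison_test'[OF summable_mult[OF \<open>summable f\<close>, of C]])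
    fix n
    have "norm (w n * Gterm m q n) \<le> C * K ^ n * norm (Gterm m q n)"
      unfolding norm_mult by (intro mult_right_mono CK) auto
    thus "norm (norm (w n * Gterm m q n)) \<le> C * f n"
      by (simp add: f_def mult.assoc)
  qed
qed

lemma summable_mult_Gterm:
  fixes q :: complex
  assumes "q \<noteq> 0" "norm q < 1" "exp_bounded w"
  shows "summable (\<lambda>n. w n * Gterm m q n)"
  by (rule summable_norm_cancel[OF summable_norm_mult_Gterm[OF assms]])

lemma suminf_mult_Gterm_split_head:
  fixes q :: complex
  assumes q: "q \<noteq> 0" "norm q < 1" and bounded: "exp_bounded c" "exp_bounded w"
    and tail: "\<And>k. c (Suc k) = w k * (1 - q ^ Suc k)\<^sup>2"
  shows "(\<Sum>n. c n * Gterm m q n) = c 0 - q powi (m + 1) * (\<Sum>n. w n * Gterm (m + 1) q n)"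
proof -
  have shift: "c (Suc k) * Gterm m q (Suc k) = - (q powi (m + 1)) * (w k * Gterm (m + 1) q k)" for k
    using Gterm_Suc[OF q, of m k] by (simp add: tail algebra_simps)
  have "(\<Sum>n. c n * Gterm m q n) = c 0 + (\<Sum>k. c (Suc k) * Gterm m q (Suc k))"
    using suminf_split_head[OF summable_mult_Gterm[OF q bounded(1)]] by simp
  also have "(\<Sum>k. c (Suc k) * Gterm m q (Suc k)) = - (q powi (m + 1)) * (\<Sum>n. w n * Gterm (m + 1) q n)"
    unfolding shift by (rule suminf_mult[OF summable_mult_Gterm[OF q bounded(2)]])
  finally show ?thesis
    by simp
qed

lemma suminf_Gterm_three_term:
  fixes q :: complex
  assumes q: "q \<noteq> 0" "norm q < 1"
    and w: "exp_bounded w\<^sub>0" "exp_bounded w\<^sub>1" "exp_bounded w\<^sub>2"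
    and weights: "\<And>k. w\<^sub>2 (Suc k) * q ^ (2 * Suc k) - 2 * w\<^sub>1 (Suc k) * q ^ Suc k + w\<^sub>0 (Suc k)
                       = w\<^sub>1 k * (1 - q ^ Suc k)\<^sup>2"
  shows "(\<Sum>n. w\<^sub>2 n * Gterm (m + 2) q n) - (2 - q powi (m + 1)) * (\<Sum>n. w\<^sub>1 n * Gterm (m + 1) q n)
           + (\<Sum>n. w\<^sub>0 n * Gterm m q n) = w\<^sub>2 0 - 2 * w\<^sub>1 0 + w\<^sub>0 0"
proof -
  define a\<^sub>2 where "a\<^sub>2 n = w\<^sub>2 n * q ^ (2 * n)" for n
  define a\<^sub>1 where "a\<^sub>1 n = 2 * w\<^sub>1 n * q ^ n" for n
  define c where "c n = a\<^sub>2 n - a\<^sub>1 n + w\<^sub>0 n" for n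
  have "exp_bounded a\<^sub>2"
    unfolding a\<^sub>2_def power_mult by (intro exp_bounded_mult exp_bounded_power w)
  moreover have "exp_bounded a\<^sub>1"
    unfolding a\<^sub>1_def by (intro exp_bounded_mult exp_bounded_const exp_bounded_power w)
  ultimately have "exp_bounded c"
    unfolding c_def by (intro exp_bounded_add exp_bounded_diff w)
  note sums = summable_mult_Gterm[OF q \<open>exp_bounded a\<^sub>2\<close>] summable_mult_Gterm[OF q \<open>exp_bounded a\<^sub>1\<close>]
    summable_mult_Gterm[OF q w(1)] summable_mult_Gterm[OF q w(2), of "m + 1"]
  have "(\<Sum>n. c n * Gterm m q n) = c 0 - q powi (m + 1) * (\<Sum>n. w\<^sub>1 n * Gterm (m + 1) q n)"
    using weights by (intro suminf_mult_Gterm_split_head[OF q \<open>exp_bounded c\<close> w(2)])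
      (simp add: c_def a\<^sub>1_def a\<^sub>2_def)
  moreover have "(\<Sum>n. w\<^sub>2 n * Gterm (m + 2) q n) = (\<Sum>n. a\<^sub>2 n * Gterm m q n)"
    using Gterm_add_int[OF q(1), of m 2] by (intro suminf_cong) (simp add: a\<^sub>2_def)
  moreover have "2 * (\<Sum>n. w\<^sub>1 n * Gterm (m + 1) q n) = (\<Sum>n. a\<^sub>1 n * Gterm m q n)"
    using Gterm_add_int[OF q(1), of m 1]
    by (subst suminf_mult[OF sums(4), symmetric], intro suminf_cong) (simp add: a\<^sub>1_def)
  moreover have "(\<Sum>n. c n * Gterm m q n) = (\<Sum>n. a\<^sub>2 n * Gterm m q n) - (\<Sum>n. a\<^sub>1 n * Gterm m q n)
                   + (\<Sum>n. w\<^sub>0 n * Gterm m q n)"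
    by (subst suminf_diff[OF sums(1,2)], subst suminf_add[OF summable_diff[OF sums(1,2)] sums(3)])
       (simp add: c_def algebra_simps)
  moreover have "c 0 = w\<^sub>2 0 - 2 * w\<^sub>1 0 + w\<^sub>0 0"
    by (simp add: c_def a\<^sub>1_def a\<^sub>2_def)
  ultimately show ?thesis
    by algebra
qed

subsection \<open>The Lambert series \<open>E\<^sub>k\<^sup>(\<^sup>n\<^sup>)\<close>\<close>

lemma summable_of_nat_power_mult_geometric:
  fixes r :: real
  assumes "0 \<le> r" "r < 1"
  shows "summable (\<lambda>t. of_nat (Suc t) ^ j * r ^ t)"
proof -
  define c where "c = (1 + r) / 2"
  have "(\<lambda>t. of_nat (Suc (Suc t)) / of_nat (Suc t) :: real) \<longlonglongrightarrow> 1"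
    by real_asymp
  hence "(\<lambda>t. (of_nat (Suc (Suc t)) / of_nat (Suc t)) ^ j * r) \<longlonglongrightarrow> 1 ^ j * r"
    by (intro tendsto_intros)
  moreover have "1 ^ j * r < c"
    using assms by (simp add: c_def)
  ultimately have "\<forall>\<^sub>F t in sequentially. (of_nat (Suc (Suc t)) / of_nat (Suc t)) ^ j * r < c"
    by (rule order_tendstoD(2))
  then obtain N where N: "\<And>t. t \<ge> N \<Longrightarrow> (of_nat (Suc (Suc t)) / of_nat (Suc t)) ^ j * r < c"
    unfolding eventually_sequentially by blast
  show ?thesis
  proof (rule summable_ratio_test[of c N])
    show "c < 1"
      using assms by (simp add: c_def)
    fix t
    assume "t \<ge> N"
    have "of_nat (Suc (Suc t)) ^ j * r ^ Suc t
          = ((of_nat (Suc (Suc t)) / of_nat (Suc t)) ^ j * r) * (of_nat (Suc t) ^ j * r ^ t)"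
      by (simp add: power_divide field_simps del: of_nat_Suc)
    also have "\<dots> \<le> c * (of_nat (Suc t) ^ j * r ^ t)"
      using N[OF \<open>t \<ge> N\<close>] assms by (intro mult_right_mono) auto
    finally show "norm (of_nat (Suc (Suc t)) ^ j * r ^ Suc t) \<le> c * norm (of_nat (Suc t) ^ j * r ^ t :: real)"
      using assms by simp
  qed
qed

lemma summable_Ekn_series:
  fixes q :: complex
  assumes "norm q < 1"
  shows "summable (\<lambda>t. of_nat (Suc t) ^ (k - 1) * q ^ (Suc t * (n + 1)) / (1 - q ^ Suc t))"
proof (rule summable_comparison_test')
  show "summable (\<lambda>t. of_nat (Suc t) ^ (k - 1) * norm q ^ t / (1 - norm q))"
    using summable_of_nat_power_mult_geometric[of "norm q" "k - 1"] assms
    by (intro summable_divide) simp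
  fix t
  have "norm (q ^ (Suc t * (n + 1))) \<le> norm q ^ t"
    unfolding norm_power using assms by (intro power_decreasing) auto
  hence "norm (of_nat (Suc t) ^ (k - 1) * q ^ (Suc t * (n + 1))) \<le> of_nat (Suc t) ^ (k - 1) * norm q ^ t"
    by (simp add: norm_mult norm_power mult_left_mono del: of_nat_Suc)
  moreover have "1 - norm q \<le> norm (1 - q ^ Suc t)" "0 < 1 - norm q"
    using norm_one_minus_power_Suc_ge[OF assms] assms by auto
  ultimately show "norm (of_nat (Suc t) ^ (k - 1) * q ^ (Suc t * (n + 1)) / (1 - q ^ Suc t))
                     \<le> of_nat (Suc t) ^ (k - 1) * norm q ^ t / (1 - norm q)"
    unfolding norm_divide by (intro frac_le) auto
qed

lemma Ekn_diff_sums: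
  fixes q :: complex
  assumes "norm q < 1"
  shows "(\<lambda>t. of_nat (Suc t) ^ (k - 1) * (q ^ Suc n) ^ Suc t) sums (Ekn k n q - Ekn k (Suc n) q)"
proof -
  have terms: "of_nat (Suc t) ^ (k - 1) * q ^ (Suc t * (n + 1)) / (1 - q ^ Suc t)
       - of_nat (Suc t) ^ (k - 1) * q ^ (Suc t * (Suc n + 1)) / (1 - q ^ Suc t)
       = of_nat (Suc t) ^ (k - 1) * (q ^ Suc n) ^ Suc t" for t
  proof -
    have "Suc t * (Suc n + 1) = Suc t * (n + 1) + Suc t"
      by simp
    hence "q ^ (Suc t * (Suc n + 1)) = q ^ (Suc t * (n + 1)) * q ^ Suc t"
      by (simp only: power_add)
    moreover have "Suc t * (n + 1) = Suc n * Suc t"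
      by simp
    hence "(q ^ Suc n) ^ Suc t = q ^ (Suc t * (n + 1))"
      by (simp only: power_mult)
    moreover have "c * x / (1 - z) - c * (x * z) / (1 - z) = c * x" if "1 - z \<noteq> 0" for c x z :: complex
    proof -
      have "c * x - c * (x * z) = c * x * (1 - z)"
        by (simp add: algebra_simps)
      thus ?thesis using that by (simp add: diff_divide_distrib[symmetric])
    qed
    ultimately show ?thesis
      using one_minus_power_Suc_nonzero[OF assms, of t] by (simp only:)
  qed
  have "(\<lambda>t. of_nat (Suc t) ^ (k - 1) * q ^ (Suc t * (n + 1)) / (1 - q ^ Suc t)
       - of_nat (Suc t) ^ (k - 1) * q ^ (Suc t * (Suc n + 1)) / (1 - q ^ Suc t))
          sums (Ekn k n q - Ekn k (Suc n) q)"
    unfolding Ekn_def by (intro sums_diff summable_sums summable_Ekn_series assms)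
  thus ?thesis
    unfolding terms .
qed

lemma Ekn_1_diff:
  fixes q :: complex
  assumes "norm q < 1"
  shows "Ekn 1 n q - Ekn 1 (Suc n) q = q ^ Suc n / (1 - q ^ Suc n)"
proof -
  have "norm (q ^ Suc n) < 1"
    unfolding norm_power using assms by (subst power_less_one_iff) auto
  from sums_mult[OF geometric_sums[OF this], of "q ^ Suc n"]
  have "(\<lambda>t. (q ^ Suc n) ^ Suc t) sums (q ^ Suc n / (1 - q ^ Suc n))"
    by simp
  moreover have "(\<lambda>t. (q ^ Suc n) ^ Suc t) sums (Ekn 1 n q - Ekn 1 (Suc n) q)"
    using Ekn_diff_sums[OF assms, of 1 n] by simp
  ultimately show ?thesis using sums_unique2 by blast
qed

lemma Ekn_2_diff:
  fixes q :: complex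
  assumes "norm q < 1"
  shows "Ekn 2 n q - Ekn 2 (Suc n) q = q ^ Suc n / (1 - q ^ Suc n)\<^sup>2"
proof -
  have "norm (q ^ Suc n) < 1"
    unfolding norm_power using assms by (subst power_less_one_iff) auto
  from sums_mult[OF geometric_deriv_sums[OF this], of "q ^ Suc n"]
  have "(\<lambda>t. of_nat (Suc t) * (q ^ Suc n) ^ Suc t) sums (q ^ Suc n / (1 - q ^ Suc n)\<^sup>2)"
    by (simp add: algebra_simps)
  moreover have "(\<lambda>t. of_nat (Suc t) * (q ^ Suc n) ^ Suc t) sums (Ekn 2 n q - Ekn 2 (Suc n) q)"
    using Ekn_diff_sums[OF assms, of 2 n] by simp
  ultimately show ?thesis using sums_unique2 by blast
qed

lemma norm_power_Suc_div_one_minus_le: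
  fixes q :: complex
  assumes "norm q < 1"
  shows "norm (q ^ Suc k / (1 - q ^ Suc k) ^ j) \<le> 1 / (1 - norm q) ^ j"
proof -
  have "(1 - norm q) ^ j \<le> norm (1 - q ^ Suc k) ^ j"
    using norm_one_minus_power_Suc_ge[OF assms] assms by (intro power_mono) auto
  moreover have "norm (q ^ Suc k) \<le> 1"
    unfolding norm_power using assms by (intro power_le_one) auto
  ultimately show ?thesis
    unfolding norm_divide norm_power[symmetric] using assms by (intro frac_le) (auto simp: norm_power)
qed

lemma Lfac_Suc:
  fixes q :: complex
  assumes "norm q < 1"
  shows "Lfac m q (Suc k) = Lfac m q k + (1 + q ^ Suc k) / (1 - q ^ Suc k)"
proof -
  have "Lfac m q (Suc k) - Lfac m q k = 1 + 2 * (Ekn 1 k q - Ekn 1 (Suc k) q)"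
    by (simp add: Lfac_def algebra_simps)
  also have "\<dots> = (1 + q ^ Suc k) / (1 - q ^ Suc k)"
    unfolding Ekn_1_diff[OF assms] using one_minus_power_Suc_nonzero[OF assms, of k]
    by (simp add: field_simps)
  finally show ?thesis by (simp add: algebra_simps)
qed

lemma Lfac_add_int: "Lfac (m + int j) q n = Lfac m q n + of_nat j"
  by (simp add: Lfac_def)

lemma exp_bounded_Lfac:
  fixes q :: complex
  assumes "norm q < 1"
  shows "exp_bounded (\<lambda>n. Lfac m q n)"
proof (rule exp_bounded_bounded_increments)
  fix n
  define x where "x = q ^ Suc n / (1 - q ^ Suc n)"
  have "Lfac m q (Suc n) - Lfac m q n = 1 + 2 * x"
    using Ekn_1_diff[OF assms, of n] by (simp add: Lfac_def x_def algebra_simps)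
  also have "norm \<dots> \<le> 1 + 2 * norm x"
    using norm_triangle_ineq[of 1 "2 * x"] by (simp add: norm_mult)
  also have "\<dots> \<le> 1 + 2 * (1 / (1 - norm q))"
    using norm_power_Suc_div_one_minus_le[OF assms, of n 1] by (simp add: x_def)
  finally show "norm (Lfac m q (Suc n) - Lfac m q n) \<le> 1 + 2 / (1 - norm q)"
    by simp
qed

lemma exp_bounded_Ekn_2:
  fixes q :: complex
  assumes "norm q < 1"
  shows "exp_bounded (\<lambda>n. Ekn 2 n q)"
proof (rule exp_bounded_bounded_increments)
  fix n
  show "norm (Ekn 2 (Suc n) q - Ekn 2 n q) \<le> 1 / (1 - norm q)\<^sup>2"
    using norm_power_Suc_div_one_minus_le[OF assms, of n 2] Ekn_2_diff[OF assms, of n]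
    by (simp add: norm_minus_commute)
qed

subsection \<open>Three-term recurrences for \<open>|q| < 1\<close>\<close>

lemma power_double_Suc: "(q :: 'a::monoid_mult) ^ (2 * Suc k) = (q ^ Suc k)\<^sup>2"
  by (subst mult.commute) (rule power_mult)

text \<open>
  The weight conditions of \<open>suminf_Gterm_three_term\<close> for \<open>G1in\<close> and \<open>G2in\<close>: here \<open>y = q^(k+1)\<close>,
  \<open>d = Lfac m q (k+1) - Lfac m q k\<close> and \<open>e = Ekn 2 k q - Ekn 2 (k+1) q\<close>.
\<close>

lemma weight_identity_linear:
  fixes l y d :: "'a::comm_ring_1"
  assumes "d * (1 - y) = 1 + y"
  shows "(l + d + 2) * y\<^sup>2 - 2 * (l + d + 1) * y + (l + d) = (l + 1) * (1 - y)\<^sup>2"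
proof -
  have "(l + d + 2) * y\<^sup>2 - 2 * (l + d + 1) * y + (l + d) - (l + 1) * (1 - y)\<^sup>2
          = (1 - y) * (d * (1 - y) - (1 + y))"
    by (simp add: algebra_simps power2_eq_square)
  thus ?thesis using assms by simp
qed

lemma weight_identity_quadratic:
  fixes l y d e E c :: "'a::field_char_0"
  assumes "d * (1 - y) = 1 + y" "e * (1 - y)\<^sup>2 = y"
  shows "(1/2 * (l + d + 2)\<^sup>2 - (E - e) - c) * y\<^sup>2
           - 2 * (1/2 * (l + d + 1)\<^sup>2 - (E - e) - c) * y
           + (1/2 * (l + d)\<^sup>2 - (E - e) - c)
         = (1/2 * (l + 1)\<^sup>2 - E - c) * (1 - y)\<^sup>2"
  using assms by algebra

lemma G0in_recurrence:
  fixes q :: complex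
  assumes q: "q \<noteq> 0" "norm q < 1"
  shows "G0in (m + 2) q - (2 - q powi (m + 1)) * G0in (m + 1) q + G0in m q = 0"
proof -
  have "(\<Sum>n. 1 * Gterm (m + 2) q n) - (2 - q powi (m + 1)) * (\<Sum>n. 1 * Gterm (m + 1) q n)
          + (\<Sum>n. 1 * Gterm m q n) = 1 - 2 * 1 + 1"
    by (rule suminf_Gterm_three_term[OF q exp_bounded_const exp_bounded_const exp_bounded_const])
       (unfold power_double_Suc, simp add: power2_eq_square algebra_simps)
  thus ?thesis by (simp add: G0in_def)
qed

lemma G1in_recurrence:
  fixes q :: complex
  assumes q: "q \<noteq> 0" "norm q < 1"
  shows "G1in (m + 2) q - (2 - q powi (m + 1)) * G1in (m + 1) q + G1in m q = 0"
proof -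
  define l where "l n = Lfac m q n" for n
  have l: "exp_bounded l"
    unfolding l_def by (rule exp_bounded_Lfac[OF q(2)])
  have "(\<Sum>n. (l n + 2) * Gterm (m + 2) q n) - (2 - q powi (m + 1)) * (\<Sum>n. (l n + 1) * Gterm (m + 1) q n)
          + (\<Sum>n. l n * Gterm m q n) = (l 0 + 2) - 2 * (l 0 + 1) + l 0"
  proof (rule suminf_Gterm_three_term[OF q l])
    show "exp_bounded (\<lambda>n. l n + 1)" "exp_bounded (\<lambda>n. l n + 2)"
      by (intro exp_bounded_add l exp_bounded_const)+
    fix k
    define y where "y = q ^ Suc k"
    define d where "d = (1 + y) / (1 - y)"
    have "d * (1 - y) = 1 + y"
      using one_minus_power_Suc_nonzero[OF q(2), of k] by (simp add: d_def y_def)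
    note weight_identity_linear[OF this, of "l k"]
    thus "(l (Suc k) + 2) * q ^ (2 * Suc k) - 2 * (l (Suc k) + 1) * q ^ Suc k + l (Suc k)
          = (l k + 1) * (1 - q ^ Suc k)\<^sup>2"
      unfolding power_double_Suc l_def Lfac_Suc[OF q(2)] y_def d_def .
  qed
  moreover have "Lfac (m + 2) q n = l n + 2" "Lfac (m + 1) q n = l n + 1" for n
    using Lfac_add_int[of m 2 q n] Lfac_add_int[of m 1 q n] by (simp_all add: l_def)
  ultimately show ?thesis
    by (simp add: G1in_def l_def)
qed

lemma G2in_recurrence:
  fixes q :: complex
  assumes q: "q \<noteq> 0" "norm q < 1"
  shows "G2in (m + 2) q - (2 - q powi (m + 1)) * G2in (m + 1) q + G2in m q = 1"
proof -
  define l where "l n = Lfac m q n" for n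
  define c where "c = 1/24 * E2 q"
  define w where "w j n = 1/2 * (l n + j)\<^sup>2 - Ekn 2 n q - c" for j :: complex and n
  have l: "exp_bounded l"
    unfolding l_def by (rule exp_bounded_Lfac[OF q(2)])
  have w: "exp_bounded (w j)" for j
    unfolding w_def power2_eq_square
    by (intro exp_bounded_diff exp_bounded_mult exp_bounded_add exp_bounded_const l
        exp_bounded_Ekn_2[OF q(2)])
  have "(\<Sum>n. w 2 n * Gterm (m + 2) q n) - (2 - q powi (m + 1)) * (\<Sum>n. w 1 n * Gterm (m + 1) q n)
          + (\<Sum>n. w 0 n * Gterm m q n) = w 2 0 - 2 * w 1 0 + w 0 0"
  proof (rule suminf_Gterm_three_term[OF q w w w])
    fix k
    define y where "y = q ^ Suc k"
    define d where "d = (1 + y) / (1 - y)"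
    define e where "e = y / (1 - y)\<^sup>2"
    have "d * (1 - y) = 1 + y" "e * (1 - y)\<^sup>2 = y"
      using one_minus_power_Suc_nonzero[OF q(2), of k] by (simp_all add: d_def e_def y_def)
    note weight_identity_quadratic[OF this, of "l k" "Ekn 2 k q" c]
    moreover have "Ekn 2 (Suc k) q = Ekn 2 k q - e"
      using Ekn_2_diff[OF q(2), of k] by (simp add: e_def y_def algebra_simps)
    ultimately show "w 2 (Suc k) * q ^ (2 * Suc k) - 2 * w 1 (Suc k) * q ^ Suc k + w 0 (Suc k)
          = w 1 k * (1 - q ^ Suc k)\<^sup>2"
      unfolding power_double_Suc w_def l_def Lfac_Suc[OF q(2)] y_def d_def by simp
  qed
  moreover have "Lfac (m + 2) q n = l n + 2" "Lfac (m + 1) q n = l n + 1" for n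
    using Lfac_add_int[of m 2 q n] Lfac_add_int[of m 1 q n] by (simp_all add: l_def)
  moreover have "w 2 0 - 2 * w 1 0 + w 0 0 = 1"
    by (simp add: w_def power2_eq_square algebra_simps)
  ultimately show ?thesis
    by (simp add: G2in_def l_def w_def c_def)
qed

subsection \<open>The Wronskian\<close>

lemma norm_suminf_mult_Gterm_minus_head_le:
  fixes q :: complex
  assumes q: "q \<noteq> 0" "norm q < 1" and w: "exp_bounded w"
  shows "norm ((\<Sum>k. w k * Gterm (int n) q k) - w 0)
           \<le> norm q ^ n * (\<Sum>k. norm (w (Suc k) * Gterm 0 q (Suc k)))"
proof -
  have shift: "Gterm (int n) q k = q ^ (n * k) * Gterm 0 q k" for k
    using Gterm_add_int[OF q(1), of 0 n k] by simp
  have summable_0: "summable (\<lambda>k. norm (w (Suc k) * Gterm 0 q (Suc k)))"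
    using summable_norm_mult_Gterm[OF q w, of 0] by (subst summable_Suc_iff)
  have bound: "norm (w (Suc k) * Gterm (int n) q (Suc k))
                 \<le> norm q ^ n * norm (w (Suc k) * Gterm 0 q (Suc k))" for k
  proof -
    have "norm q ^ (n * Suc k) \<le> norm q ^ n"
      using q(2) by (intro power_decreasing) auto
    from mult_right_mono[OF this, of "norm (w (Suc k)) * norm (Gterm 0 q (Suc k))"]
    show ?thesis unfolding shift norm_mult norm_power by (simp add: ac_simps)
  qed
  have summable_n: "summable (\<lambda>k. norm (w (Suc k) * Gterm (int n) q (Suc k)))"
    by (rule summable_comparison_test'[OF summable_mult[OF summable_0, of "norm q ^ n"]])
       (use bound in auto)
  have "(\<Sum>k. w k * Gterm (int n) q k) - w 0 = (\<Sum>k. w (Suc k) * Gterm (int n) q (Suc k))"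
    using suminf_split_head[OF summable_mult_Gterm[OF q w]] by simp
  also have "norm \<dots> \<le> (\<Sum>k. norm (w (Suc k) * Gterm (int n) q (Suc k)))"
    by (rule summable_norm[OF summable_n])
  also have "\<dots> \<le> (\<Sum>k. norm q ^ n * norm (w (Suc k) * Gterm 0 q (Suc k)))"
    by (rule suminf_le[OF bound summable_n summable_mult[OF summable_0]])
  also have "\<dots> = norm q ^ n * (\<Sum>k. norm (w (Suc k) * Gterm 0 q (Suc k)))"
    by (rule suminf_mult[OF summable_0])
  finally show ?thesis .
qed

lemma suminf_mult_Gterm_tendsto_head:
  fixes q :: complex
  assumes q: "q \<noteq> 0" "norm q < 1" and w: "exp_bounded w"
  shows "(\<lambda>n. \<Sum>k. w k * Gterm (int n) q k) \<longlonglongrightarrow> w 0"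
proof (rule LIM_zero_cancel, rule Lim_null_comparison)
  show "\<forall>\<^sub>F n in sequentially. norm ((\<Sum>k. w k * Gterm (int n) q k) - w 0)
          \<le> norm q ^ n * (\<Sum>k. norm (w (Suc k) * Gterm 0 q (Suc k)))"
    using norm_suminf_mult_Gterm_minus_head_le[OF q w] by simp
  show "(\<lambda>n. norm q ^ n * (\<Sum>k. norm (w (Suc k) * Gterm 0 q (Suc k)))) \<longlonglongrightarrow> 0"
    using q(2) by (intro tendsto_mult_left_zero LIMSEQ_power_zero) simp
qed

lemma Gin_wronskian_shift_invariant:
  fixes q :: complex
  assumes q: "q \<noteq> 0" "norm q < 1"
  shows "G1in m q * G0in (m + 1) q - G1in (m + 1) q * G0in m q
           = G1in 0 q * G0in 1 q - G1in 1 q * G0in 0 q"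
proof -
  define W where "W m = G1in m q * G0in (m + 1) q - G1in (m + 1) q * G0in m q" for m
  have step: "W (i + 1) = W i" for i
  proof -
    have rec: "G0in (i + 2) q = (2 - q powi (i + 1)) * G0in (i + 1) q - G0in i q"
              "G1in (i + 2) q = (2 - q powi (i + 1)) * G1in (i + 1) q - G1in i q"
      using G0in_recurrence[OF q, of i] G1in_recurrence[OF q, of i] by (simp_all add: algebra_simps)
    have "W (i + 1) = G1in (i + 1) q * G0in (i + 2) q - G1in (i + 2) q * G0in (i + 1) q"
      by (simp add: W_def add.assoc)
    thus ?thesis
      unfolding rec W_def by (simp add: algebra_simps)
  qed
  have "W m = W 0"
  proof (induction m rule: int_induct[where k = 0])
    case (step1 i)
    thus ?case using step[of i] by simp
  next
    case (step2 i)
    thus ?case using step[of "i - 1"] by simp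
  qed simp
  thus ?thesis by (simp add: W_def)
qed

lemma G1in_add_int:
  fixes q :: complex
  assumes q: "q \<noteq> 0" "norm q < 1"
  shows "G1in (m + int j) q = of_nat j * G0in (m + int j) q + (\<Sum>k. Lfac m q k * Gterm (m + int j) q k)"
proof -
  note summable_G0 = summable_mult_Gterm[OF q exp_bounded_const, of 1 "m + int j"]
  note summable_rest = summable_mult_Gterm[OF q exp_bounded_Lfac[OF q(2)], of m "m + int j"]
  have "G1in (m + int j) q
          = (\<Sum>k. of_nat j * (1 * Gterm (m + int j) q k) + Lfac m q k * Gterm (m + int j) q k)"
    unfolding G1in_def using Lfac_add_int[of m j q] by (intro suminf_cong) (simp add: algebra_simps)
  also have "\<dots> = of_nat j * G0in (m + int j) q + (\<Sum>k. Lfac m q k * Gterm (m + int j) q k)"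
    unfolding G0in_def
    by (subst suminf_add[symmetric, OF summable_mult[OF summable_G0] summable_rest],
        subst suminf_mult[OF summable_G0]) simp
  finally show ?thesis .
qed

lemma Gin_wronskian:
  fixes q :: complex
  assumes q: "q \<noteq> 0" "norm q < 1"
  shows "G1in m q * G0in (m + 1) q - G1in (m + 1) q * G0in m q = -1"
proof -
  define g where "g n = (\<Sum>k. 1 * Gterm (int n) q k)" for n
  define h where "h n = (\<Sum>k. Lfac 0 q k * Gterm (int n) q k)" for n
  have g: "g \<longlonglongrightarrow> 1"
    unfolding g_def using suminf_mult_Gterm_tendsto_head[OF q exp_bounded_const, of 1] by simp
  have h: "h \<longlonglongrightarrow> Lfac 0 q 0"
    unfolding h_def by (rule suminf_mult_Gterm_tendsto_head[OF q exp_bounded_Lfac[OF q(2)]])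
  have G0in_nat: "G0in (int n) q = g n" for n
    by (simp add: g_def G0in_def)
  have G1in_nat: "G1in (int n) q = of_nat n * g n + h n" for n
    using G1in_add_int[OF q, of 0 n] by (simp add: g_def h_def G0in_def)
  have "G1in 0 q * G0in 1 q - G1in 1 q * G0in 0 q = h n * g (Suc n) - g (Suc n) * g n - h (Suc n) * g n" for n
  proof -
    have "G1in 0 q * G0in 1 q - G1in 1 q * G0in 0 q
            = G1in (int n) q * G0in (int (Suc n)) q - G1in (int (Suc n)) q * G0in (int n) q"
      using Gin_wronskian_shift_invariant[OF q, of "int n"] by (simp add: add.commute)
    also have "\<dots> = h n * g (Suc n) - g (Suc n) * g n - h (Suc n) * g n"
      unfolding G0in_nat G1in_nat by (simp add: algebra_simps)
    finally show ?thesis .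
  qed
  moreover have "(\<lambda>n. h n * g (Suc n) - g (Suc n) * g n - h (Suc n) * g n) \<longlonglongrightarrow>
                   Lfac 0 q 0 * 1 - 1 * 1 - Lfac 0 q 0 * 1"
    by (intro tendsto_intros h g LIMSEQ_Suc)
  ultimately have "G1in 0 q * G0in 1 q - G1in 1 q * G0in 0 q = -1"
    by (simp add: LIMSEQ_const_iff)
  thus ?thesis
    using Gin_wronskian_shift_invariant[OF q, of m] by simp
qed

subsection \<open>Extension to \<open>|q| > 1\<close>\<close>

lemma inverse_in_unit_disc:
  fixes q :: complex
  assumes "norm q \<noteq> 1" "\<not> norm q < 1"
  shows "inverse q \<noteq> 0" "norm (inverse q) < 1"
proof -
  have "norm q > 1"
    using assms by simp
  thus "inverse q \<noteq> 0" "norm (inverse q) < 1"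
    by (auto simp: norm_inverse inverse_less_1_iff)
qed

lemma inverse_outside_unit_disc:
  fixes q :: complex
  assumes "q \<noteq> 0" "norm q < 1"
  shows "\<not> norm (inverse q) < 1"
proof -
  have "1 < inverse (norm q)"
    using assms by (intro one_less_inverse) auto
  thus ?thesis by (simp add: norm_inverse)
qed

lemma recurrence_reflect:
  fixes F :: "int \<Rightarrow> 'a::field"
  assumes "\<And>m. F (m + 2) - (2 - p powi (m + 1)) * F (m + 1) + F m = c"
  shows "F (- m) - (2 - inverse p powi (m + 1)) * F (- (m + 1)) + F (- (m + 2)) = c"
proof -
  have indices: "- (m + 2) + 2 = - m" "- (m + 2) + 1 = - (m + 1)"
    by simp_all
  have power: "p powi (- (m + 1)) = inverse p powi (m + 1)"
    by (simp only: power_int_minus power_int_inverse)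
  from assms[of "- (m + 2)"] show ?thesis
    unfolding indices power .
qed

lemma G0_recurrence:
  fixes q :: complex
  assumes q: "q \<noteq> 0" "norm q \<noteq> 1"
  shows "G0 (m + 2) q - (2 - q powi (m + 1)) * G0 (m + 1) q + G0 m q = 0"
proof (cases "norm q < 1")
  case True
  thus ?thesis using G0in_recurrence[OF q(1) True] by (simp add: G0_def)
next
  case False
  from recurrence_reflect[of "\<lambda>k. G0in k (inverse q)",
      OF G0in_recurrence[OF inverse_in_unit_disc[OF q(2) False]], where m = m]
  show ?thesis using False by (simp add: G0_def algebra_simps)
qed

lemma G1_recurrence:
  fixes q :: complex
  assumes q: "q \<noteq> 0" "norm q \<noteq> 1"
  shows "G1 (m + 2) q - (2 - q powi (m + 1)) * G1 (m + 1) q + G1 m q = 0"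
proof (cases "norm q < 1")
  case True
  thus ?thesis using G1in_recurrence[OF q(1) True] by (simp add: G1_def)
next
  case False
  from recurrence_reflect[of "\<lambda>k. G1in k (inverse q)",
      OF G1in_recurrence[OF inverse_in_unit_disc[OF q(2) False]], where m = m]
  show ?thesis using False by (simp add: G1_def algebra_simps)
qed

lemma G2_recurrence:
  fixes q :: complex
  assumes q: "q \<noteq> 0" "norm q \<noteq> 1"
  shows "G2 (m + 2) q - (2 - q powi (m + 1)) * G2 (m + 1) q + G2 m q = 1"
proof (cases "norm q < 1")
  case True
  thus ?thesis using G2in_recurrence[OF q(1) True] by (simp add: G2_def)
next
  case False
  from recurrence_reflect[of "\<lambda>k. G2in k (inverse q)",
      OF G2in_recurrence[OF inverse_in_unit_disc[OF q(2) False]], where m = m]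
  show ?thesis using False by (simp add: G2_def algebra_simps)
qed

lemma G_wronskian:
  fixes q :: complex
  assumes q: "q \<noteq> 0" "norm q \<noteq> 1"
  shows "G1 m q * G0 (m + 1) q - G1 (m + 1) q * G0 m q = -1"
proof (cases "norm q < 1")
  case True
  thus ?thesis using Gin_wronskian[OF q(1) True] by (simp add: G0_def G1_def)
next
  case False
  have "- (m + 1) + 1 = - m"
    by simp
  with Gin_wronskian[OF inverse_in_unit_disc[OF q(2) False], of "- (m + 1)"]
  show ?thesis using False by (simp add: G0_def G1_def algebra_simps)
qed

lemma G_inverse:
  fixes q :: complex
  assumes "q \<noteq> 0" "norm q \<noteq> 1"
  shows "G0 m (inverse q) = G0 (- m) q" "G1 m (inverse q) = - G1 (- m) q"
    and "G2 m (inverse q) = G2 (- m) q"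
  using inverse_in_unit_disc[OF assms(2)] inverse_outside_unit_disc[OF assms(1)]
  by (cases "norm q < 1"; simp add: G0_def G1_def G2_def)+

lemma Jmat_Suc:
  fixes q :: complex
  assumes "q \<noteq> 0" "norm q \<noteq> 1"
  shows "Jmat (m + 1) q = Jmat m q ** Amat m q"
proof -
  have index: "m + 1 + 1 = m + 2"
    by simp
  have recurrences: "G0 (m + 2) q = (2 - q powi (m + 1)) * G0 (m + 1) q - G0 m q"
    "G1 (m + 2) q = (2 - q powi (m + 1)) * G1 (m + 1) q - G1 m q"
    "G2 (m + 2) q = (2 - q powi (m + 1)) * G2 (m + 1) q - G2 m q + 1"
    using G0_recurrence[OF assms, of m] G1_recurrence[OF assms, of m] G2_recurrence[OF assms, of m]
    by (simp_all add: algebra_simps)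
  show ?thesis
    unfolding Jmat_def index recurrences Amat_def vec_eq_iff forall_3 matrix_matrix_mult_def
    by (simp add: sum_3)
qed

lemma det_Jmat: "det (Jmat m q) = G1 m q * G0 (m + 1) q - G1 (m + 1) q * G0 m q"
  by (simp add: det_3 Jmat_def)

lemma Jmat_inverse:
  fixes q :: complex
  assumes "q \<noteq> 0" "norm q \<noteq> 1"
  shows "Jmat m (inverse q) =
           (vector [vector [1, 0, 0], vector [0, -1, 0], vector [0, 0, 1]] :: complex ^ 3 ^ 3)
           ** Jmat (- m - 1) q
           ** (vector [vector [1, 0, 0], vector [0, 0, 1], vector [0, 1, 0]] :: complex ^ 3 ^ 3)"
proof -
  have indices: "- m - 1 + 1 = - m" "- m - 1 = - (m + 1)"
    by simp_all
  show ?thesis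
    unfolding Jmat_def indices G_inverse[OF assms] vec_eq_iff forall_3 matrix_matrix_mult_def
    by (simp add: sum_3)
qed

theorem theorem2p1:
  fixes m :: int and q :: complex
  assumes "q \<noteq> 0" and "norm q \<noteq> 1"
  shows "Jmat (m + 1) q = Jmat m q ** Amat m q \<and>
         det (Jmat m q) = -1 \<and>
         Jmat m (inverse q) =
           (vector [vector [1, 0, 0], vector [0, -1, 0], vector [0, 0, 1]] :: complex ^ 3 ^ 3)
           ** Jmat (- m - 1) q
           ** (vector [vector [1, 0, 0], vector [0, 0, 1], vector [0, 1, 0]] :: complex ^ 3 ^ 3)"
  using Jmat_Suc[OF assms] det_Jmat[of m q] G_wronskian[OF assms] Jmat_inverse[OF assms]
  by (intro conjI) simp_all

end
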